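(* Let $\mu\in\mathcal{F}(\mathbb{X})$, let $X_1,X_2,\dots$ be i.i.d. with law $\mu$, and let $\hat\mu_n$ be the empirical measure. Then almost surely $\hat\mu_n\ll\mu$ and $H(\hat\mu_n)<\infty$, $D(\hat\mu_n\|\mu)<\infty$, and for every $n\ge1$ and every $\epsilon>0$: $$\mathbb{P}^n_\mu\big(D(\hat\mu_n\|\mu)>\epsilon\big)\le 2^{|A_\mu|+1}\exp\Big(-\frac{2\mathbf{m}_\mu^2\,n\epsilon^2}{(\log e)^2}\Big),$$ $$\mathbb{P}^n_\mu\big(|H(\hat\mu_n)-H(\mu)|>\epsilon\big)\le 2^{|A_\mu|+1}\exp\Big(-\frac{2n\epsilon^2}{(\mathbf{M}_\mu+\log e/\mathbf{m}_\mu)^2}\Big),$$ $$\mathbb{P}^n_\mu\big(D(\mu\|\hat\mu_n)>\epsilon\big)\le 2^{|A_\mu|+1}\Big[\exp\Big(-\frac{2n\epsilon^2}{(\log e)^2(1/\mathbf{m}_\mu+1)^2}\Big)+\exp(-n\mathbf{m}_\mu^2)\Big].$$ Moreover, almost surely $D(\mu\|\hat\mu_n)<\infty$ for all sufficiently large $n$.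
   Context: $\mathbb{X}$ is a countably infinite set and $\mathcal{P}(\mathbb{X})$ the set of probability measures on all subsets of $\mathbb{X}$. For $\mu\in\mathcal{P}(\mathbb{X})$, $f_\mu(x)=\mu(\{x\})$ is its pmf and $A_\mu=\{x:f_\mu(x)>0\}$ its support; $\mathcal{F}(\mathbb{X})$ is the set of $\mu$ with $|A_\mu|<\infty$. For $\mu\in\mathcal{F}(\mathbb{X})$, $\mathbf{m}_\mu=\min_{x\in A_\mu}f_\mu(x)$ and $\mathbf{M}_\mu=\log(1/\mathbf{m}_\mu)$. $\log$ is the logarithm to a fixed base $b>1$ (so $\log e=1/\ln b$). Entropy: $H(\mu)=-\sum_{x\in A_\mu}f_\mu(x)\log f_\mu(x)$. I-divergence: $D(\mu\|\nu)=\sum_{x\in A_\mu}f_\mu(x)\log\frac{f_\mu(x)}{f_\nu(x)}$ if $\mu\ll\nu$, and $+\infty$ otherwise. Given i.i.d. $X_1,X_2,\dots\sim\mu$, $\mathbb{P}_\mu$ is the law of the whole sequence and $\mathbb{P}^n_\mu$ that of $(X_1,\dots,X_n)$; the empirical measure is $\hat\mu_n(A)=\frac1n\sum_{k=1}^n\mathbb{1}_A(X_k)$ for $A\subset\mathbb{X}$. *)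

theory Defs
  imports "HOL-Probability.Probability"
begin

text \<open>Logarithms are to a fixed base b > 1 (log b).  Probability measures on the
countable type 'a are pmfs; support A_mu = set_pmf mu, pmf mu x = f_mu(x).\<close>

definition entropy :: "real \<Rightarrow> 'a pmf \<Rightarrow> ereal" where
  "entropy b p = enn2ereal (\<integral>\<^sup>+ x. ennreal (- pmf p x * log b (pmf p x)) \<partial>count_space (set_pmf p))"

text \<open>The sum is taken as (positive part) - (negative part); the
  negative part is always finite when p << q, so this is the usual value in [0, infinity].\<close>
definition idiv :: "real \<Rightarrow> 'a pmf \<Rightarrow> 'a pmf \<Rightarrow> ereal" where
  "idiv b p q =
     (if set_pmf p \<subseteq> set_pmf q then
        enn2ereal (\<integral>\<^sup>+ x. ennreal (pmf p x * log b (pmf p x / pmf q x)) \<partial>count_space (set_pmf p))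
        - enn2ereal (\<integral>\<^sup>+ x. ennreal (- (pmf p x * log b (pmf p x / pmf q x))) \<partial>count_space (set_pmf p))
      else \<infinity>)"

definition min_mass :: "'a pmf \<Rightarrow> real" where
  "min_mass p = Min (pmf p ` set_pmf p)"

definition Max_log :: "real \<Rightarrow> 'a pmf \<Rightarrow> real" where
  "Max_log b p = log b (1 / min_mass p)"

text \<open>Empirical measure of the first n sample points (n \<ge> 1):
  pmf (empirical n x) y = card {k<n. x k = y} / n.\<close>
definition empirical :: "nat \<Rightarrow> (nat \<Rightarrow> 'a) \<Rightarrow> 'a pmf" where
  "empirical n x = map_pmf x (pmf_of_set {..<n})"

text \<open>Law P_mu of the whole i.i.d. sequence X_1, X_2, ... (indexed from 0).\<close>
definition iid_seq :: "'a pmf \<Rightarrow> (nat \<Rightarrow> 'a) measure" where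
  "iid_seq p = PiM UNIV (\<lambda>_. measure_pmf p)"

text \<open>Law P^n_mu of (X_1, ..., X_n) (coordinates \<ge> n are fixed to a dummy value).\<close>
definition iid_n :: "nat \<Rightarrow> 'a pmf \<Rightarrow> (nat \<Rightarrow> 'a) pmf" where
  "iid_n n p = Pi_pmf {..<n} undefined (\<lambda>_. p)"

end

theory Submission
  imports Defs
begin

text \<open>Write \<open>\<mu>\<^sub>n\<close> for the empirical pmf, \<open>A\<close> for the support of \<open>\<mu>\<close>, \<open>m\<close> for its least mass and
  \<open>T\<close> for the total variation distance between \<open>\<mu>\<^sub>n\<close> and \<open>\<mu>\<close>. Once the sample lies in \<open>A\<close>,
  all three quantities are controlled by \<open>T\<close> alone. The tangent bound
  \<open>log x \<le> log e (x - 1)\<close> bounds a divergence by \<open>log e\<close> times a \<open>\<chi>\<^sup>2\<close>-distance, and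
  \<open>\<chi>\<^sup>2(\<mu>\<^sub>n, \<mu>) \<le> T / m\<close>; the entropy difference is \<open>D(\<mu>\<^sub>n\<parallel>\<mu>)\<close> plus a linear term of size at
  most \<open>M T\<close>; if \<open>2 T\<^sup>2 \<le> m\<^sup>2\<close> then \<open>\<mu>\<^sub>n > 0\<close> on \<open>A\<close> and \<open>\<chi>\<^sup>2(\<mu>, \<mu>\<^sub>n) \<le> (1/m + 1) T\<close>, and
  otherwise \<open>T > m / \<surd>2\<close>. Since \<open>T = \<mu>\<^sub>n(B) - \<mu>(B)\<close> for \<open>B = {\<mu>\<^sub>n > \<mu>}\<close> and \<open>n \<mu>\<^sub>n(B)\<close> is
  binomial, Hoeffding's inequality and a union bound over the subsets of \<open>A\<close> give
  \<open>P(T > \<delta>) \<le> 2 ^ |A| exp (-2 n \<delta>\<^sup>2)\<close>. Almost surely every sample lies in \<open>A\<close>, and every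
  point of \<open>A\<close> is eventually sampled.\<close>

section \<open>Total variation controls divergences and entropy\<close>

lemma log_le_log_e_times:
  assumes "1 < b" "0 < x"
  shows "log b x \<le> log b (exp 1) * (x - 1)"
proof -
  have "ln x \<le> x - 1" using assms(2) by (rule ln_le_minus_one)
  moreover have "0 < ln b" using assms(1) by simp
  ultimately show ?thesis by (simp add: log_def divide_right_mono)
qed

lemma mult_log_ratio_le:
  fixes x y :: real
  assumes "1 < b" "0 \<le> x" "0 < y"
  shows "x * log b (x / y) \<le> log b (exp 1) * ((x - y)\<^sup>2 / y + (x - y))"
proof (cases "x = 0")
  case True
  then show ?thesis using assms(3) by (simp add: power2_eq_square)
next
  case False
  then have "0 < x" using assms(2) by simp
  then have "x * log b (x / y) \<le> x * (log b (exp 1) * (x / y - 1))"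
    using log_le_log_e_times[OF assms(1), of "x / y"] assms(3) by (intro mult_left_mono) auto
  also have "\<dots> = log b (exp 1) * ((x - y)\<^sup>2 / y + (x - y))"
    using assms(3) by (simp add: field_simps power2_eq_square)
  finally show ?thesis .
qed

lemma mult_log_ratio_ge:
  fixes x y :: real
  assumes "1 < b" "0 \<le> x" "0 < y"
  shows "log b (exp 1) * (x - y) \<le> x * log b (x / y)"
proof (cases "x = 0")
  case True
  then show ?thesis using assms by simp
next
  case False
  then have x: "0 < x" using assms(2) by simp
  have ident: "L * (x - y) = - (x * (L * (y / x - 1)))" for L
    using x by (simp add: field_simps)
  have "log b (exp 1) * (x - y) = - (x * (log b (exp 1) * (y / x - 1)))"
    by (rule ident)
  also have "\<dots> \<le> - (x * log b (y / x))"
    using log_le_log_e_times[OF assms(1), of "y / x"] x assms(3)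
    by (simp only: neg_le_iff_le) (intro mult_left_mono, auto)
  also have "\<dots> = x * log b (x / y)"
    using x assms by (simp add: log_divide algebra_simps)
  finally show ?thesis .
qed

lemma divergence_le_chi_square:
  assumes "1 < b" "\<And>x. x \<in> A \<Longrightarrow> 0 \<le> p x \<and> 0 < q x" "sum p A = sum q A"
  shows "(\<Sum>x\<in>A. p x * log b (p x / q x)) \<le> log b (exp 1) * (\<Sum>x\<in>A. (p x - q x)\<^sup>2 / q x)"
proof -
  have "(\<Sum>x\<in>A. p x * log b (p x / q x))
        \<le> (\<Sum>x\<in>A. log b (exp 1) * ((p x - q x)\<^sup>2 / q x + (p x - q x)))"
    using assms by (intro sum_mono mult_log_ratio_le) auto
  also have "\<dots> = log b (exp 1) * ((\<Sum>x\<in>A. (p x - q x)\<^sup>2 / q x) + (sum p A - sum q A))"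
    by (simp only: sum_distrib_left[symmetric] sum.distrib sum_subtractf)
  finally show ?thesis using assms(3) by simp
qed

lemma divergence_nonneg:
  assumes "1 < b" "\<And>x. x \<in> A \<Longrightarrow> 0 \<le> p x \<and> 0 < q x" "sum p A = sum q A"
  shows "0 \<le> (\<Sum>x\<in>A. p x * log b (p x / q x))"
proof -
  have "log b (exp 1) * (sum p A - sum q A) = (\<Sum>x\<in>A. log b (exp 1) * (p x - q x))"
    by (simp only: sum_distrib_left[symmetric] sum_subtractf)
  also have "\<dots> \<le> (\<Sum>x\<in>A. p x * log b (p x / q x))"
    using assms by (intro sum_mono mult_log_ratio_ge) auto
  finally show ?thesis using assms(3) by simp
qed

text \<open>Only the positive part is summed; when \<open>p\<close> and \<open>q\<close> have the same mass on \<open>A\<close> this is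
  half their \<open>\<ell>\<^sup>1\<close>-distance (\<open>total_variation_commute\<close>).\<close>

definition total_variation :: "'a set \<Rightarrow> ('a \<Rightarrow> real) \<Rightarrow> ('a \<Rightarrow> real) \<Rightarrow> real" where
  "total_variation A p q = (\<Sum>x\<in>A. max 0 (p x - q x))"

lemma total_variation_nonneg: "0 \<le> total_variation A p q"
  unfolding total_variation_def by (rule sum_nonneg) simp

lemma total_variation_commute:
  assumes "sum p A = sum q A"
  shows "total_variation A p q = total_variation A q p"
proof -
  have "total_variation A p q - total_variation A q p = sum p A - sum q A"
    unfolding total_variation_def sum_subtractf[symmetric] by (rule sum.cong) auto
  then show ?thesis using assms by simp
qed

lemma diff_le_total_variation:
  assumes "finite A" "x \<in> A"
  shows "p x - q x \<le> total_variation A p q"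
proof -
  have "max 0 (p x - q x) \<le> total_variation A p q"
    unfolding total_variation_def using assms by (intro member_le_sum) auto
  then show ?thesis by simp
qed

lemma sum_fractions_le_inverse_plus_one:
  fixes t m :: real
  assumes "0 \<le> t" "2 * t\<^sup>2 \<le> m\<^sup>2" "0 < m" "m \<le> 1/2"
  shows "t / (m - t) + t / (m + t) \<le> 1 / m + 1"
proof -
  have tt: "t\<^sup>2 < m\<^sup>2" using assms(2,3) by (smt (verit) zero_less_power)
  then have tm: "t < m" using assms(3) by (auto intro: power_less_imp_less_base[OF tt])
  have "(4 * t)\<^sup>2 \<le> (3 * m)\<^sup>2"
    using assms(2) by (simp add: power_mult_distrib) (use zero_le_power2[of m] in linarith)
  then have t4: "4 * t \<le> 3 * m" by (rule power2_le_imp_le) (use assms(3) in simp)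
  have "t / (m - t) + t / (m + t) = 2 * m * t / (m\<^sup>2 - t\<^sup>2)"
    using tm assms(1) by (simp add: field_simps power2_eq_square)
  also have "\<dots> \<le> 2 * m * t / (m\<^sup>2 / 2)"
    using assms tt by (intro divide_left_mono) auto
  also have "\<dots> = 4 * t / m" using assms(3) by (simp add: field_simps power2_eq_square)
  also have "\<dots> \<le> 3" using t4 assms(3) by (simp add: field_simps)
  also have "3 \<le> 1 / m + 1" using assms(3,4) by (simp add: field_simps)
  finally show ?thesis .
qed

locale finite_distributions =
  fixes A :: "'a set" and p q :: "'a \<Rightarrow> real" and m :: real
  assumes finite: "finite A"
    and p_nonneg: "\<And>x. x \<in> A \<Longrightarrow> 0 \<le> p x" and sum_p: "sum p A = 1"
    and sum_q: "sum q A = 1"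
    and m_pos: "0 < m" and m_le_q: "\<And>x. x \<in> A \<Longrightarrow> m \<le> q x"
begin

abbreviation tv :: real where
  "tv \<equiv> total_variation A p q"

lemma q_pos: "x \<in> A \<Longrightarrow> 0 < q x"
  using m_pos m_le_q by fastforce

lemma q_le_1: "x \<in> A \<Longrightarrow> q x \<le> 1"
  using member_le_sum[of x A q] finite q_pos sum_q by fastforce

lemma diff_le_tv:
  assumes "x \<in> A"
  shows "p x - q x \<le> tv" and "q x - p x \<le> tv"
  using diff_le_total_variation[OF finite assms, of q p] diff_le_total_variation[OF finite assms, of p q]
    total_variation_commute[of p A q] sum_p sum_q by simp_all

lemma tv_le: "tv \<le> 1 - m"
proof -
  obtain x0 where x0: "x0 \<in> A" "q x0 \<le> p x0"
  proof (rule ccontr)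
    assume "\<not> thesis"
    with that have "\<forall>x\<in>A. p x < q x" by force
    moreover have "A \<noteq> {}" using sum_q by auto
    ultimately have "sum p A < sum q A" using finite by (intro sum_strict_mono) auto
    with sum_p sum_q show False by simp
  qed
  have "tv = total_variation (A - {x0}) q p"
    using total_variation_commute[of p A q] sum_p sum_q x0
    by (simp add: total_variation_def sum.remove[OF finite x0(1)])
  also have "\<dots> \<le> (\<Sum>x\<in>A - {x0}. q x)"
    unfolding total_variation_def by (rule sum_mono) (use p_nonneg q_pos in force)
  also have "\<dots> = 1 - q x0" using sum.remove[OF finite x0(1), of q] sum_q by simp
  finally show ?thesis using m_le_q[OF x0(1)] by simp
qed

lemma chi_square_le: "(\<Sum>x\<in>A. (p x - q x)\<^sup>2 / q x) \<le> tv / m"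
proof -
  have pointwise: "(p x - q x)\<^sup>2 / q x \<le> max 0 (p x - q x) * (tv / m) + max 0 (q x - p x)"
    if x: "x \<in> A" for x
  proof (cases "q x \<le> p x")
    case True
    have "(p x - q x)\<^sup>2 / q x = (p x - q x) * ((p x - q x) / q x)" by (simp add: power2_eq_square)
    also have "\<dots> \<le> (p x - q x) * (tv / m)"
      using True diff_le_tv[OF x] q_pos[OF x] m_le_q[OF x] m_pos total_variation_nonneg
      by (intro mult_left_mono frac_le) auto
    finally show ?thesis using True by simp
  next
    case False
    have "(p x - q x)\<^sup>2 / q x = (q x - p x) * ((q x - p x) / q x)"
      by (simp add: power2_eq_square algebra_simps)
    also have "\<dots> \<le> (q x - p x) * 1"
      using False q_pos[OF x] p_nonneg[OF x] by (intro mult_left_mono) auto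
    finally show ?thesis using False by simp
  qed
  have "(\<Sum>x\<in>A. (p x - q x)\<^sup>2 / q x)
        \<le> (\<Sum>x\<in>A. max 0 (p x - q x) * (tv / m) + max 0 (q x - p x))"
    by (rule sum_mono) (rule pointwise)
  also have "\<dots> = tv * (tv / m) + total_variation A q p"
    unfolding total_variation_def by (simp only: sum.distrib sum_distrib_right[symmetric])
  also have "\<dots> = tv * (tv + m) / m"
    using total_variation_commute[of p A q] sum_p sum_q m_pos by (simp add: field_simps)
  also have "\<dots> \<le> tv / m"
    using mult_left_le[of "tv + m" tv] tv_le total_variation_nonneg[of A p q] m_pos
    by (intro divide_right_mono) auto
  finally show ?thesis .
qed

lemma divergence_le:
  assumes "1 < b"
  shows "(\<Sum>x\<in>A. p x * log b (p x / q x)) \<le> log b (exp 1) * (tv / m)"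
proof -
  have "(\<Sum>x\<in>A. p x * log b (p x / q x)) \<le> log b (exp 1) * (\<Sum>x\<in>A. (p x - q x)\<^sup>2 / q x)"
    using assms p_nonneg q_pos sum_p sum_q by (intro divergence_le_chi_square) auto
  also have "\<dots> \<le> log b (exp 1) * (tv / m)"
    using assms chi_square_le by (intro mult_left_mono) auto
  finally show ?thesis .
qed

lemma entropy_diff_eq:
  assumes "1 < b"
  shows "(\<Sum>x\<in>A. - p x * log b (p x)) - (\<Sum>x\<in>A. - q x * log b (q x))
         = (\<Sum>x\<in>A. (p x - q x) * log b (1 / q x)) - (\<Sum>x\<in>A. p x * log b (p x / q x))"
  unfolding sum_subtractf[symmetric]
proof (rule sum.cong[OF refl])
  fix x assume "x \<in> A"
  with q_pos p_nonneg have "0 < q x" "p x = 0 \<or> 0 < p x" by force+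
  then show "- p x * log b (p x) - - q x * log b (q x)
             = (p x - q x) * log b (1 / q x) - p x * log b (p x / q x)"
    using assms by (auto simp: log_divide algebra_simps)
qed

lemma abs_sum_diff_mult_log_inverse_le:
  assumes "1 < b"
  shows "\<bar>\<Sum>x\<in>A. (p x - q x) * log b (1 / q x)\<bar> \<le> log b (1 / m) * tv"
proof -
  let ?l = "\<lambda>x. log b (1 / q x)"
  have l: "0 \<le> ?l x" "?l x \<le> log b (1 / m)" if "x \<in> A" for x
    using assms q_pos[OF that] q_le_1[OF that] m_le_q[OF that] m_pos by (simp_all add: frac_le)
  have upper: "(u - v) * ?l x \<le> max 0 (u - v) * log b (1 / m)" if "x \<in> A" for u v x
    using l[OF that] by (cases "v \<le> u") (auto intro: mult_left_mono mult_nonpos_nonneg)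
  have "- (max 0 (q x - p x) * log b (1 / m)) \<le> (p x - q x) * ?l x" if "x \<in> A" for x
    using upper[OF that, of "q x" "p x"] by (simp add: algebra_simps)
  with upper have "(\<Sum>x\<in>A. (p x - q x) * ?l x) \<le> tv * log b (1 / m)"
    and "- (total_variation A q p * log b (1 / m)) \<le> (\<Sum>x\<in>A. (p x - q x) * ?l x)"
    unfolding total_variation_def sum_distrib_right sum_negf[symmetric] by (auto intro: sum_mono)
  then show ?thesis
    using total_variation_commute[of p A q] sum_p sum_q by (simp add: abs_le_iff mult.commute)
qed

lemma entropy_diff_le:
  assumes b: "1 < b"
  shows "\<bar>(\<Sum>x\<in>A. - p x * log b (p x)) - (\<Sum>x\<in>A. - q x * log b (q x))\<bar>
         \<le> (log b (1 / m) + log b (exp 1) / m) * tv"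
proof -
  let ?D = "\<Sum>x\<in>A. p x * log b (p x / q x)"
  have "0 \<le> ?D"
    using b p_nonneg q_pos sum_p sum_q by (intro divergence_nonneg) auto
  moreover have "?D \<le> log b (exp 1) * (tv / m)"
    by (rule divergence_le[OF b])
  moreover have "(log b (1 / m) + log b (exp 1) / m) * tv = log b (1 / m) * tv + log b (exp 1) * (tv / m)"
    by (simp add: algebra_simps)
  ultimately show ?thesis
    using entropy_diff_eq[OF b] abs_sum_diff_mult_log_inverse_le[OF b] by (simp only: abs_le_iff) linarith
qed

lemma tv_eq_0_if_m_gt_half:
  assumes "1/2 < m"
  shows "tv = 0"
proof -
  obtain a where a: "a \<in> A" using sum_q by fastforce
  have "A = {a}"
  proof (rule ccontr)
    assume "A \<noteq> {a}"
    then obtain c where c: "c \<in> A" "c \<noteq> a" using a by auto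
    have "q a + q c = sum q {a, c}" using c by simp
    also have "\<dots> \<le> sum q A" using a c finite q_pos by (intro sum_mono2) (auto intro: less_imp_le)
    finally show False using m_le_q[OF a] m_le_q[OF c(1)] assms sum_q by simp
  qed
  then show ?thesis using sum_p sum_q by (simp add: total_variation_def)
qed

context
  assumes small: "2 * tv\<^sup>2 \<le> m\<^sup>2"
begin

lemma tv_less_m: "tv < m"
proof -
  have "tv\<^sup>2 < m\<^sup>2" using small m_pos by (smt (verit) zero_less_power)
  then show ?thesis using m_pos by (auto intro: power_less_imp_less_base)
qed

lemma p_pos: "x \<in> A \<Longrightarrow> 0 < p x"
  using diff_le_tv(2)[of x] m_le_q[of x] tv_less_m by fastforce

lemma reverse_chi_square_term_le:
  assumes x: "x \<in> A"
  shows "(q x - p x)\<^sup>2 / p x \<le> max 0 (q x - p x) * (tv / (m - tv)) + max 0 (p x - q x) * (tv / (m + tv))"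
proof (cases "p x \<le> q x")
  case True
  have "(q x - p x)\<^sup>2 / p x = (q x - p x) * ((q x - p x) / p x)" by (simp add: power2_eq_square)
  also have "\<dots> \<le> (q x - p x) * (tv / (m - tv))"
    using True diff_le_tv[OF x] p_pos[OF x] m_le_q[OF x] tv_less_m total_variation_nonneg
    by (intro mult_left_mono frac_le) auto
  finally show ?thesis using True tv_less_m by simp
next
  case False
  have "(p x - q x) * m \<le> tv * q x"
    using False diff_le_tv[OF x] m_le_q[OF x] m_pos total_variation_nonneg by (intro mult_mono) auto
  then have ratio: "(p x - q x) / p x \<le> tv / (m + tv)"
    using p_pos[OF x] m_pos total_variation_nonneg[of A p q] by (simp add: divide_simps algebra_simps)
  have "(q x - p x)\<^sup>2 / p x = (p x - q x) * ((p x - q x) / p x)"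
    by (simp add: power2_eq_square algebra_simps)
  also have "\<dots> \<le> (p x - q x) * (tv / (m + tv))"
    using False ratio by (intro mult_left_mono) auto
  finally show ?thesis using False tv_less_m total_variation_nonneg[of A p q] by simp
qed

lemma reverse_chi_square_le: "(\<Sum>x\<in>A. (q x - p x)\<^sup>2 / p x) \<le> (1 / m + 1) * tv"
proof (cases "1/2 < m")
  case True
  then have "tv = 0" by (rule tv_eq_0_if_m_gt_half)
  then have "p x = q x" if "x \<in> A" for x using diff_le_tv[OF that] by simp
  then show ?thesis using \<open>tv = 0\<close> by simp
next
  case False
  have "(\<Sum>x\<in>A. (q x - p x)\<^sup>2 / p x)
        \<le> (\<Sum>x\<in>A. max 0 (q x - p x) * (tv / (m - tv)) + max 0 (p x - q x) * (tv / (m + tv)))"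
    by (rule sum_mono) (rule reverse_chi_square_term_le)
  also have "\<dots> = total_variation A q p * (tv / (m - tv)) + tv * (tv / (m + tv))"
    unfolding total_variation_def by (simp only: sum.distrib sum_distrib_right[symmetric])
  also have "\<dots> = tv * (tv / (m - tv) + tv / (m + tv))"
    using total_variation_commute[of p A q] sum_p sum_q by (simp add: algebra_simps)
  also have "\<dots> \<le> tv * (1 / m + 1)"
    using sum_fractions_le_inverse_plus_one[OF total_variation_nonneg small m_pos] False
      total_variation_nonneg[of A p q]
    by (intro mult_left_mono) auto
  finally show ?thesis by (simp add: algebra_simps)
qed

lemma reverse_divergence_le:
  assumes "1 < b"
  shows "(\<Sum>x\<in>A. q x * log b (q x / p x)) \<le> log b (exp 1) * ((1 / m + 1) * tv)"
proof -
  have "(\<Sum>x\<in>A. q x * log b (q x / p x)) \<le> log b (exp 1) * (\<Sum>x\<in>A. (q x - p x)\<^sup>2 / p x)"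
    using assms q_pos p_pos sum_p sum_q by (intro divergence_le_chi_square) (auto intro: less_imp_le)
  also have "\<dots> \<le> log b (exp 1) * ((1 / m + 1) * tv)"
    using assms reverse_chi_square_le by (intro mult_left_mono) auto
  finally show ?thesis .
qed

end

end

section \<open>The empirical measure of a sample\<close>

lemma prob_empirical:
  assumes "0 < n"
  shows "measure_pmf.prob (empirical n \<omega>) B = real (card {k\<in>{..<n}. \<omega> k \<in> B}) / real n"
proof -
  have "measure_pmf.prob (empirical n \<omega>) B = measure_pmf.prob (pmf_of_set {..<n}) (\<omega> -` B)"
    by (simp add: empirical_def measure_map_pmf)
  also have "\<dots> = real (card ({..<n} \<inter> \<omega> -` B)) / real n"
    using assms by (subst measure_pmf_of_set) auto
  also have "{..<n} \<inter> \<omega> -` B = {k\<in>{..<n}. \<omega> k \<in> B}" by auto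
  finally show ?thesis .
qed

lemma set_pmf_empirical: "0 < n \<Longrightarrow> set_pmf (empirical n \<omega>) = \<omega> ` {..<n}"
  by (simp add: empirical_def, subst set_pmf_of_set) auto

lemma set_pmf_iid_n: "\<omega> \<in> set_pmf (iid_n n \<mu>) \<Longrightarrow> k < n \<Longrightarrow> \<omega> k \<in> set_pmf \<mu>"
  by (auto simp: iid_n_def set_Pi_pmf PiE_dflt_def)

lemma set_pmf_empirical_subset:
  "0 < n \<Longrightarrow> \<omega> \<in> set_pmf (iid_n n \<mu>) \<Longrightarrow> set_pmf (empirical n \<omega>) \<subseteq> set_pmf \<mu>"
  by (auto simp: set_pmf_empirical set_pmf_iid_n)

lemma min_mass_pos: "finite (set_pmf \<mu>) \<Longrightarrow> 0 < min_mass \<mu>"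
  unfolding min_mass_def by (subst Min_gr_iff) (auto simp: set_pmf_not_empty pmf_positive)

lemma min_mass_le_pmf: "finite (set_pmf \<mu>) \<Longrightarrow> x \<in> set_pmf \<mu> \<Longrightarrow> min_mass \<mu> \<le> pmf \<mu> x"
  unfolding min_mass_def by (rule Min_le) auto

lemma min_mass_le_1:
  assumes "finite (set_pmf \<mu>)"
  shows "min_mass \<mu> \<le> 1"
proof -
  obtain x where "x \<in> set_pmf \<mu>" using set_pmf_not_empty[of \<mu>] by blast
  then show ?thesis using min_mass_le_pmf[OF assms] pmf_le_1[of \<mu> x] by fastforce
qed

lemma finite_distributions_empirical:
  assumes "finite (set_pmf \<mu>)" "0 < n" "\<omega> \<in> set_pmf (iid_n n \<mu>)"
  shows "finite_distributions (set_pmf \<mu>) (pmf (empirical n \<omega>)) (pmf \<mu>) (min_mass \<mu>)"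
proof
  show "sum (pmf (empirical n \<omega>)) (set_pmf \<mu>) = 1"
    using assms(1) set_pmf_empirical_subset[OF assms(2,3)] by (rule sum_pmf_eq_1)
  show "sum (pmf \<mu>) (set_pmf \<mu>) = 1"
    using assms(1) by (rule sum_pmf_eq_1) simp
  show "0 < min_mass \<mu>" using assms(1) by (rule min_mass_pos)
  show "\<And>x. x \<in> set_pmf \<mu> \<Longrightarrow> min_mass \<mu> \<le> pmf \<mu> x" using assms(1) by (rule min_mass_le_pmf)
qed (simp_all add: assms(1))

lemma enn2ereal_nn_integral_count_space_finite:
  assumes "finite S"
  shows "enn2ereal (\<integral>\<^sup>+ x. ennreal (f x) \<partial>count_space S) = ereal (\<Sum>x\<in>S. max 0 (f x))"
proof -
  have "(\<integral>\<^sup>+ x. ennreal (f x) \<partial>count_space S) = (\<Sum>x\<in>S. ennreal (max 0 (f x)))"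
    using assms by (simp add: nn_integral_count_space_finite ennreal_max_0)
  also have "\<dots> = ennreal (\<Sum>x\<in>S. max 0 (f x))"
    by (rule sum_ennreal) auto
  finally show ?thesis by (simp add: enn2ereal_ennreal sum_nonneg)
qed

lemma entropy_eq_sum:
  assumes "1 < b" "finite A" "set_pmf p \<subseteq> A"
  shows "entropy b p = ereal (\<Sum>x\<in>A. - pmf p x * log b (pmf p x))"
proof -
  have "entropy b p = ereal (\<Sum>x\<in>set_pmf p. max 0 (- pmf p x * log b (pmf p x)))"
    unfolding entropy_def using assms finite_subset
    by (intro enn2ereal_nn_integral_count_space_finite) blast
  also have "\<dots> = ereal (\<Sum>x\<in>set_pmf p. - pmf p x * log b (pmf p x))"
  proof (intro arg_cong[where f = ereal] sum.cong refl)
    fix x assume "x \<in> set_pmf p"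
    then have "0 < pmf p x" by (simp add: pmf_positive)
    with assms(1) pmf_le_1[of p x] have "0 \<le> - pmf p x * log b (pmf p x)"
      by (simp add: mult_nonneg_nonpos)
    then show "max 0 (- pmf p x * log b (pmf p x)) = - pmf p x * log b (pmf p x)" by simp
  qed
  also have "(\<Sum>x\<in>set_pmf p. - pmf p x * log b (pmf p x)) = (\<Sum>x\<in>A. - pmf p x * log b (pmf p x))"
    using assms(2,3) by (intro sum.mono_neutral_left) (auto simp: set_pmf_iff)
  finally show ?thesis .
qed

lemma idiv_eq_sum:
  assumes "finite A" "set_pmf p \<subseteq> set_pmf q" "set_pmf q \<subseteq> A"
  shows "idiv b p q = ereal (\<Sum>x\<in>A. pmf p x * log b (pmf p x / pmf q x))"
proof -
  let ?f = "\<lambda>x. pmf p x * log b (pmf p x / pmf q x)"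
  have fin: "finite (set_pmf p)"
    using finite_subset[OF order_trans[OF assms(2,3)] assms(1)] .
  have "idiv b p q = ereal (\<Sum>x\<in>set_pmf p. max 0 (?f x)) - ereal (\<Sum>x\<in>set_pmf p. max 0 (- ?f x))"
    unfolding idiv_def if_P[OF assms(2)] enn2ereal_nn_integral_count_space_finite[OF fin] ..
  also have "\<dots> = ereal ((\<Sum>x\<in>set_pmf p. max 0 (?f x)) - (\<Sum>x\<in>set_pmf p. max 0 (- ?f x)))"
    by simp
  also have "(\<Sum>x\<in>set_pmf p. max 0 (?f x)) - (\<Sum>x\<in>set_pmf p. max 0 (- ?f x)) = (\<Sum>x\<in>set_pmf p. ?f x)"
    unfolding sum_subtractf[symmetric] by (rule sum.cong) auto
  also have "(\<Sum>x\<in>set_pmf p. ?f x) = (\<Sum>x\<in>A. ?f x)"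
    using assms by (intro sum.mono_neutral_left) (auto simp: set_pmf_iff)
  finally show ?thesis .
qed

lemma total_variation_gt_if_idiv_empirical_pmf_gt:
  assumes fin: "finite (set_pmf \<mu>)" and b: "1 < b" and n: "0 < n" and \<omega>: "\<omega> \<in> set_pmf (iid_n n \<mu>)"
    and gt: "ereal \<epsilon> < idiv b (empirical n \<omega>) \<mu>"
  shows "\<epsilon> * min_mass \<mu> / log b (exp 1) < total_variation (set_pmf \<mu>) (pmf (empirical n \<omega>)) (pmf \<mu>)"
proof -
  interpret finite_distributions "set_pmf \<mu>" "pmf (empirical n \<omega>)" "pmf \<mu>" "min_mass \<mu>"
    using fin n \<omega> by (rule finite_distributions_empirical)
  have "\<epsilon> < (\<Sum>x\<in>set_pmf \<mu>. pmf (empirical n \<omega>) x * log b (pmf (empirical n \<omega>) x / pmf \<mu> x))"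
    using gt idiv_eq_sum[OF fin set_pmf_empirical_subset[OF n \<omega>] order.refl] by simp
  also have "\<dots> \<le> log b (exp 1) * (tv / min_mass \<mu>)"
    by (rule divergence_le[OF b])
  finally show ?thesis using m_pos b by (simp add: field_simps)
qed

lemma total_variation_gt_if_entropy_empirical_diff_gt:
  assumes fin: "finite (set_pmf \<mu>)" and b: "1 < b" and n: "0 < n" and \<omega>: "\<omega> \<in> set_pmf (iid_n n \<mu>)"
    and gt: "ereal \<epsilon> < \<bar>entropy b (empirical n \<omega>) - entropy b \<mu>\<bar>"
  shows "\<epsilon> / (Max_log b \<mu> + log b (exp 1) / min_mass \<mu>)
         < total_variation (set_pmf \<mu>) (pmf (empirical n \<omega>)) (pmf \<mu>)"
proof -
  interpret finite_distributions "set_pmf \<mu>" "pmf (empirical n \<omega>)" "pmf \<mu>" "min_mass \<mu>"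
    using fin n \<omega> by (rule finite_distributions_empirical)
  have "0 \<le> Max_log b \<mu>" using b m_pos min_mass_le_1[OF fin] by (simp add: Max_log_def)
  then have C: "0 < Max_log b \<mu> + log b (exp 1) / min_mass \<mu>" using b m_pos by (simp add: add_nonneg_pos)
  have "\<epsilon> < \<bar>(\<Sum>x\<in>set_pmf \<mu>. - pmf (empirical n \<omega>) x * log b (pmf (empirical n \<omega>) x))
             - (\<Sum>x\<in>set_pmf \<mu>. - pmf \<mu> x * log b (pmf \<mu> x))\<bar>"
    using gt entropy_eq_sum[OF b fin set_pmf_empirical_subset[OF n \<omega>]] entropy_eq_sum[OF b fin order.refl]
    by simp
  also have "\<dots> \<le> (Max_log b \<mu> + log b (exp 1) / min_mass \<mu>) * tv"
    unfolding Max_log_def by (rule entropy_diff_le[OF b])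
  finally show ?thesis using C by (simp add: field_simps)
qed

lemma total_variation_gt_if_idiv_pmf_empirical_gt:
  assumes fin: "finite (set_pmf \<mu>)" and b: "1 < b" and n: "0 < n" and \<omega>: "\<omega> \<in> set_pmf (iid_n n \<mu>)"
    and gt: "ereal \<epsilon> < idiv b \<mu> (empirical n \<omega>)"
  shows "min (\<epsilon> / (log b (exp 1) * (1 / min_mass \<mu> + 1))) (min_mass \<mu> / sqrt 2)
         < total_variation (set_pmf \<mu>) (pmf (empirical n \<omega>)) (pmf \<mu>)"
proof -
  interpret finite_distributions "set_pmf \<mu>" "pmf (empirical n \<omega>)" "pmf \<mu>" "min_mass \<mu>"
    using fin n \<omega> by (rule finite_distributions_empirical)
  \<comment> \<open>If \<open>2 T\<^sup>2 > m\<^sup>2\<close> the empirical pmf may vanish on \<open>A\<close> and the divergence be infinite;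
      such samples are paid for by \<open>T > m / \<surd>2\<close>.\<close>
  show ?thesis
  proof (cases "2 * tv\<^sup>2 \<le> (min_mass \<mu>)\<^sup>2")
    case True
    have "set_pmf \<mu> \<subseteq> set_pmf (empirical n \<omega>)"
      using p_pos[OF True] by (force simp: set_pmf_iff)
    then have "\<epsilon> < (\<Sum>x\<in>set_pmf \<mu>. pmf \<mu> x * log b (pmf \<mu> x / pmf (empirical n \<omega>) x))"
      using gt idiv_eq_sum[OF fin _ set_pmf_empirical_subset[OF n \<omega>]] by simp
    also have "\<dots> \<le> log b (exp 1) * ((1 / min_mass \<mu> + 1) * tv)"
      by (rule reverse_divergence_le[OF True b])
    finally have "\<epsilon> / (log b (exp 1) * (1 / min_mass \<mu> + 1)) < tv"
      using b m_pos by (simp add: field_simps add_pos_pos)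
    then show ?thesis by simp
  next
    case False
    then have "(min_mass \<mu> / sqrt 2)\<^sup>2 < tv\<^sup>2" by (simp add: power_divide)
    then have "min_mass \<mu> / sqrt 2 < tv" using total_variation_nonneg by (rule power_less_imp_less_base)
    then show ?thesis by simp
  qed
qed

section \<open>Concentration of the empirical measure\<close>

lemma count_iid_n_binomial:
  "map_pmf (\<lambda>\<omega>. card {k\<in>{..<n}. \<omega> k \<in> B}) (iid_n n \<mu>) = binomial_pmf n (measure_pmf.prob \<mu> B)"
proof -
  define r where "r = measure_pmf.prob \<mu> B"
  have r: "r \<in> {0..1}" by (auto simp: r_def)
  have "bernoulli_pmf r = map_pmf (\<lambda>x. x \<in> B) \<mu>"
  proof (rule pmf_eqI)
    fix t :: bool
    have "measure_pmf.prob \<mu> {x. x \<notin> B} = 1 - r"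
      using measure_pmf.prob_compl[of B \<mu>] by (simp add: r_def Compl_eq_Diff_UNIV[symmetric] Collect_neg_eq)
    then show "pmf (bernoulli_pmf r) t = pmf (map_pmf (\<lambda>x. x \<in> B) \<mu>) t"
      using r by (cases t) (simp_all add: pmf_map r_def vimage_def)
  qed
  then have "Pi_pmf {..<n} (undefined \<in> B) (\<lambda>_. bernoulli_pmf r) = map_pmf ((\<circ>) (\<lambda>x. x \<in> B)) (iid_n n \<mu>)"
    unfolding iid_n_def by (simp add: Pi_pmf_map)
  then show ?thesis
    using binomial_pmf_altdef'[of "{..<n}" n r "undefined \<in> B"] r
    by (simp add: r_def map_pmf_comp o_def)
qed

lemma prob_empirical_ge:
  assumes "0 < n" "0 \<le> \<delta>"
  shows "measure_pmf.prob (iid_n n \<mu>)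
           {\<omega>. measure_pmf.prob \<mu> B + \<delta> \<le> measure_pmf.prob (empirical n \<omega>) B}
         \<le> exp (- 2 * real n * \<delta>\<^sup>2)"
proof -
  interpret binomial_distribution n "measure_pmf.prob \<mu> B" by unfold_locales simp
  have "measure_pmf.prob (iid_n n \<mu>)
           {\<omega>. measure_pmf.prob \<mu> B + \<delta> \<le> measure_pmf.prob (empirical n \<omega>) B}
        = measure_pmf.prob (map_pmf (\<lambda>\<omega>. card {k\<in>{..<n}. \<omega> k \<in> B}) (iid_n n \<mu>))
            {x. measure_pmf.prob \<mu> B + \<delta> \<le> real x / real n}"
    using assms(1) by (simp add: measure_map_pmf vimage_def prob_empirical)
  also have "\<dots> \<le> exp (- 2 * real n * \<delta>\<^sup>2)"
    unfolding count_iid_n_binomial using prob_ge'[OF assms] by simp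
  finally show ?thesis .
qed

lemma total_variation_pmf_eq:
  assumes "finite A"
  shows "total_variation A (pmf p) (pmf q)
         = measure_pmf.prob p {x\<in>A. pmf q x < pmf p x} - measure_pmf.prob q {x\<in>A. pmf q x < pmf p x}"
proof -
  let ?B = "{x\<in>A. pmf q x < pmf p x}"
  have "total_variation A (pmf p) (pmf q) = (\<Sum>x\<in>?B. max 0 (pmf p x - pmf q x))"
    unfolding total_variation_def using assms by (rule sum.mono_neutral_right) auto
  also have "\<dots> = (\<Sum>x\<in>?B. pmf p x - pmf q x)"
    by (rule sum.cong) auto
  also have "\<dots> = measure_pmf.prob p ?B - measure_pmf.prob q ?B"
    using assms by (simp add: measure_measure_pmf_finite sum_subtractf)
  finally show ?thesis .
qed

lemma prob_total_variation_gt: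
  assumes "finite A" "0 < n" "0 \<le> \<delta>"
  shows "measure_pmf.prob (iid_n n \<mu>) {\<omega>. \<delta> < total_variation A (pmf (empirical n \<omega>)) (pmf \<mu>)}
         \<le> 2 ^ card A * exp (- 2 * real n * \<delta>\<^sup>2)"
proof -
  let ?E = "\<lambda>B. {\<omega>. measure_pmf.prob \<mu> B + \<delta> \<le> measure_pmf.prob (empirical n \<omega>) B}"
  have "{\<omega>. \<delta> < total_variation A (pmf (empirical n \<omega>)) (pmf \<mu>)} \<subseteq> (\<Union>B\<in>Pow A. ?E B)"
  proof
    fix \<omega> assume "\<omega> \<in> {\<omega>. \<delta> < total_variation A (pmf (empirical n \<omega>)) (pmf \<mu>)}"
    then have "\<omega> \<in> ?E {x\<in>A. pmf \<mu> x < pmf (empirical n \<omega>) x}"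
      by (simp add: total_variation_pmf_eq[OF assms(1)])
    then show "\<omega> \<in> (\<Union>B\<in>Pow A. ?E B)" by (rule UN_I[rotated]) auto
  qed
  then have "measure_pmf.prob (iid_n n \<mu>) {\<omega>. \<delta> < total_variation A (pmf (empirical n \<omega>)) (pmf \<mu>)}
        \<le> measure_pmf.prob (iid_n n \<mu>) (\<Union>B\<in>Pow A. ?E B)"
    by (rule measure_pmf.finite_measure_mono) simp
  also have "\<dots> \<le> (\<Sum>B\<in>Pow A. measure_pmf.prob (iid_n n \<mu>) (?E B))"
    using assms(1) by (intro measure_pmf.finite_measure_subadditive_finite) auto
  also have "\<dots> \<le> (\<Sum>B\<in>Pow A. exp (- 2 * real n * \<delta>\<^sup>2))"
    using assms(2,3) by (intro sum_mono prob_empirical_ge)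
  also have "\<dots> = 2 ^ card A * exp (- 2 * real n * \<delta>\<^sup>2)"
    using assms(1) by (simp add: card_Pow)
  finally show ?thesis .
qed

lemma prob_le_by_total_variation:
  assumes "finite (set_pmf \<mu>)" "0 < n" "0 \<le> \<delta>"
    and "\<And>\<omega>. \<omega> \<in> set_pmf (iid_n n \<mu>) \<Longrightarrow> \<omega> \<in> S \<Longrightarrow>
           \<delta> < total_variation (set_pmf \<mu>) (pmf (empirical n \<omega>)) (pmf \<mu>)"
  shows "measure_pmf.prob (iid_n n \<mu>) S \<le> 2 ^ card (set_pmf \<mu>) * exp (- 2 * real n * \<delta>\<^sup>2)"
proof -
  have "measure_pmf.prob (iid_n n \<mu>) S
        \<le> measure_pmf.prob (iid_n n \<mu>) {\<omega>. \<delta> < total_variation (set_pmf \<mu>) (pmf (empirical n \<omega>)) (pmf \<mu>)}"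
    using assms(4) by (intro measure_pmf.finite_measure_mono_AE) (auto simp: AE_measure_pmf_iff)
  also have "\<dots> \<le> 2 ^ card (set_pmf \<mu>) * exp (- 2 * real n * \<delta>\<^sup>2)"
    using assms(1-3) by (rule prob_total_variation_gt)
  finally show ?thesis .
qed

lemma prob_idiv_empirical_pmf_gt:
  assumes fin: "finite (set_pmf \<mu>)" and b: "1 < b" and n: "0 < n" and "0 < \<epsilon>"
  shows "measure_pmf.prob (iid_n n \<mu>) {\<omega>. ereal \<epsilon> < idiv b (empirical n \<omega>) \<mu>}
         \<le> 2 ^ card (set_pmf \<mu>) * exp (- (2 * (min_mass \<mu>)\<^sup>2 * real n * \<epsilon>\<^sup>2) / (log b (exp 1))\<^sup>2)"
proof -
  define \<delta> where "\<delta> = \<epsilon> * min_mass \<mu> / log b (exp 1)"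
  have "0 \<le> \<delta>" using \<open>0 < \<epsilon>\<close> min_mass_pos[OF fin] b by (simp add: \<delta>_def)
  then have "measure_pmf.prob (iid_n n \<mu>) {\<omega>. ereal \<epsilon> < idiv b (empirical n \<omega>) \<mu>}
             \<le> 2 ^ card (set_pmf \<mu>) * exp (- 2 * real n * \<delta>\<^sup>2)"
    using total_variation_gt_if_idiv_empirical_pmf_gt[OF fin b n]
    by (intro prob_le_by_total_variation[OF fin n]) (simp_all add: \<delta>_def)
  also have "- 2 * real n * \<delta>\<^sup>2 = - (2 * (min_mass \<mu>)\<^sup>2 * real n * \<epsilon>\<^sup>2) / (log b (exp 1))\<^sup>2"
    by (simp add: \<delta>_def power_divide power_mult_distrib)
  finally show ?thesis .
qed

lemma prob_entropy_empirical_diff_gt: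
  assumes fin: "finite (set_pmf \<mu>)" and b: "1 < b" and n: "0 < n" and "0 < \<epsilon>"
  shows "measure_pmf.prob (iid_n n \<mu>) {\<omega>. ereal \<epsilon> < \<bar>entropy b (empirical n \<omega>) - entropy b \<mu>\<bar>}
         \<le> 2 ^ card (set_pmf \<mu>) * exp (- (2 * real n * \<epsilon>\<^sup>2) / (Max_log b \<mu> + log b (exp 1) / min_mass \<mu>)\<^sup>2)"
proof -
  define C where "C = Max_log b \<mu> + log b (exp 1) / min_mass \<mu>"
  have "0 \<le> Max_log b \<mu>" using b min_mass_pos[OF fin] min_mass_le_1[OF fin] by (simp add: Max_log_def)
  then have "0 \<le> \<epsilon> / C" using \<open>0 < \<epsilon>\<close> b min_mass_pos[OF fin] by (simp add: C_def)
  then have "measure_pmf.prob (iid_n n \<mu>) {\<omega>. ereal \<epsilon> < \<bar>entropy b (empirical n \<omega>) - entropy b \<mu>\<bar>}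
             \<le> 2 ^ card (set_pmf \<mu>) * exp (- 2 * real n * (\<epsilon> / C)\<^sup>2)"
    using total_variation_gt_if_entropy_empirical_diff_gt[OF fin b n]
    by (intro prob_le_by_total_variation[OF fin n]) (simp_all add: C_def)
  also have "- 2 * real n * (\<epsilon> / C)\<^sup>2 = - (2 * real n * \<epsilon>\<^sup>2) / C\<^sup>2"
    by (simp add: power_divide)
  finally show ?thesis by (simp add: C_def)
qed

lemma prob_idiv_pmf_empirical_gt:
  assumes fin: "finite (set_pmf \<mu>)" and b: "1 < b" and n: "0 < n" and "0 < \<epsilon>"
  shows "measure_pmf.prob (iid_n n \<mu>) {\<omega>. ereal \<epsilon> < idiv b \<mu> (empirical n \<omega>)}
         \<le> 2 ^ card (set_pmf \<mu>) *
            (exp (- (2 * real n * \<epsilon>\<^sup>2) / ((log b (exp 1))\<^sup>2 * (1 / min_mass \<mu> + 1)\<^sup>2))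
             + exp (- real n * (min_mass \<mu>)\<^sup>2))"
proof -
  define \<delta>\<^sub>1 \<delta>\<^sub>2 where "\<delta>\<^sub>1 = \<epsilon> / (log b (exp 1) * (1 / min_mass \<mu> + 1))"
    and "\<delta>\<^sub>2 = min_mass \<mu> / sqrt 2"
  have "0 \<le> min \<delta>\<^sub>1 \<delta>\<^sub>2"
    using \<open>0 < \<epsilon>\<close> b min_mass_pos[OF fin] by (simp add: \<delta>\<^sub>1_def \<delta>\<^sub>2_def add_pos_pos)
  then have "measure_pmf.prob (iid_n n \<mu>) {\<omega>. ereal \<epsilon> < idiv b \<mu> (empirical n \<omega>)}
             \<le> 2 ^ card (set_pmf \<mu>) * exp (- 2 * real n * (min \<delta>\<^sub>1 \<delta>\<^sub>2)\<^sup>2)"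
    using total_variation_gt_if_idiv_pmf_empirical_gt[OF fin b n]
    by (intro prob_le_by_total_variation[OF fin n]) (simp_all add: \<delta>\<^sub>1_def \<delta>\<^sub>2_def)
  also have "exp (- 2 * real n * (min \<delta>\<^sub>1 \<delta>\<^sub>2)\<^sup>2) \<le> exp (- 2 * real n * \<delta>\<^sub>1\<^sup>2) + exp (- 2 * real n * \<delta>\<^sub>2\<^sup>2)"
    by (simp add: min_def add_increasing add_increasing2)
  also have "- 2 * real n * \<delta>\<^sub>1\<^sup>2 = - (2 * real n * \<epsilon>\<^sup>2) / ((log b (exp 1))\<^sup>2 * (1 / min_mass \<mu> + 1)\<^sup>2)"
    by (simp add: \<delta>\<^sub>1_def power_divide power_mult_distrib)
  also have "- 2 * real n * \<delta>\<^sub>2\<^sup>2 = - real n * (min_mass \<mu>)\<^sup>2"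
    by (simp add: \<delta>\<^sub>2_def power_divide)
  finally show ?thesis by simp
qed

section \<open>Almost sure behaviour\<close>

lemma AE_iid_seq_in_support: "AE \<omega> in iid_seq \<mu>. \<forall>k. \<omega> k \<in> set_pmf \<mu>"
proof -
  interpret product_prob_space "\<lambda>_::nat. measure_pmf \<mu>" UNIV by unfold_locales
  have "AE \<omega> in iid_seq \<mu>. \<omega> k \<in> set_pmf \<mu>" for k
    unfolding iid_seq_def by (intro AE_component) (auto simp: AE_measure_pmf)
  then show ?thesis by (simp add: AE_all_countable)
qed

lemma AE_iid_seq_hits:
  assumes "x \<in> set_pmf \<mu>"
  shows "AE \<omega> in iid_seq \<mu>. \<exists>k. \<omega> k = x"
proof -
  interpret P: prob_space "iid_seq \<mu>"
    unfolding iid_seq_def by (intro prob_space_PiM measure_pmf.prob_space_axioms)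
  define Z where "Z = {\<omega>::nat \<Rightarrow> _. \<forall>k. \<omega> k \<noteq> x}"
  define c where "c = 1 - pmf \<mu> x"
  have c: "0 \<le> c" "c < 1" using assms pmf_le_1[of \<mu> x] by (auto simp: c_def pmf_positive)
  have Z: "Z \<in> sets (iid_seq \<mu>)"
  proof -
    have "Z = (\<Inter>k. {\<omega>\<in>space (iid_seq \<mu>). \<omega> k \<in> UNIV - {x}})"
      by (auto simp: Z_def iid_seq_def space_PiM)
    also have "\<dots> \<in> sets (iid_seq \<mu>)"
      unfolding iid_seq_def
      by (intro sets.countable_INT' measurable_sets[OF measurable_component_singleton]) auto
    finally show ?thesis .
  qed
  have "P.prob Z \<le> c ^ N" for N
  proof -
    define E where "E = prod_emb UNIV (\<lambda>_::nat. measure_pmf \<mu>) {..<N} (PiE {..<N} (\<lambda>_. UNIV - {x}))"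
    have "emeasure (iid_seq \<mu>) E = (\<Prod>i\<in>{..<N}. emeasure (measure_pmf \<mu>) (UNIV - {x}))"
      unfolding iid_seq_def E_def
      by (rule emeasure_PiM_emb) (auto intro: measure_pmf.prob_space_axioms)
    also have "emeasure (measure_pmf \<mu>) (UNIV - {x}) = ennreal c"
      using measure_pmf.prob_compl[of "{x}" \<mu>]
      by (simp add: measure_pmf.emeasure_eq_measure c_def measure_pmf_single)
    finally have "P.prob E = c ^ N" using c by (simp add: ennreal_power P.emeasure_eq_measure)
    moreover have "E \<in> sets (iid_seq \<mu>)"
      unfolding E_def iid_seq_def by (intro measurable_prod_emb sets_PiM_I_finite) auto
    moreover have "Z \<subseteq> E" by (auto simp: Z_def E_def prod_emb_def PiE_def extensional_def)
    ultimately show ?thesis using P.finite_measure_mono by metis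
  qed
  moreover have "(\<lambda>N. c ^ N) \<longlonglongrightarrow> 0" using c by (intro LIMSEQ_power_zero) simp
  ultimately have "P.prob Z \<le> 0" by (intro LIMSEQ_le_const) auto
  then have "emeasure (iid_seq \<mu>) Z = 0"
    using Z measure_nonneg[of "iid_seq \<mu>" Z] by (simp add: P.emeasure_eq_measure)
  then show ?thesis by (intro AE_I[OF _ _ Z]) (auto simp: Z_def)
qed

lemma AE_empirical_finite:
  assumes fin: "finite (set_pmf \<mu>)" and b: "1 < b"
  shows "AE \<omega> in iid_seq \<mu>. \<forall>n\<ge>1.
           set_pmf (empirical n \<omega>) \<subseteq> set_pmf \<mu> \<and>
           entropy b (empirical n \<omega>) < \<infinity> \<and> idiv b (empirical n \<omega>) \<mu> < \<infinity>"
  using AE_iid_seq_in_support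
proof (rule eventually_mono, intro allI impI conjI)
  fix \<omega> :: "nat \<Rightarrow> 'a" and n :: nat
  assume "\<forall>k. \<omega> k \<in> set_pmf \<mu>" "1 \<le> n"
  then show sub: "set_pmf (empirical n \<omega>) \<subseteq> set_pmf \<mu>"
    by (auto simp: set_pmf_empirical)
  show "entropy b (empirical n \<omega>) < \<infinity>"
    by (simp add: entropy_eq_sum[OF b fin sub])
  show "idiv b (empirical n \<omega>) \<mu> < \<infinity>"
    by (simp add: idiv_eq_sum[OF fin sub order.refl])
qed

lemma AE_eventually_idiv_pmf_empirical_finite:
  assumes fin: "finite (set_pmf \<mu>)"
  shows "AE \<omega> in iid_seq \<mu>. eventually (\<lambda>n. idiv b \<mu> (empirical n \<omega>) < \<infinity>) sequentially"
proof -
  have "AE \<omega> in iid_seq \<mu>. \<forall>x\<in>set_pmf \<mu>. \<exists>k. \<omega> k = x"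
    using AE_iid_seq_hits by (rule AE_finite_allI[OF fin])
  then show ?thesis
  proof (rule eventually_mono)
    fix \<omega> :: "nat \<Rightarrow> 'a" assume hits: "\<forall>x\<in>set_pmf \<mu>. \<exists>k. \<omega> k = x"
    have reach: "eventually (\<lambda>n. x \<in> \<omega> ` {..<n}) sequentially" if x: "x \<in> set_pmf \<mu>" for x
    proof -
      obtain k where k: "\<omega> k = x" using hits x by blast
      show ?thesis using eventually_gt_at_top[of k] by (rule eventually_mono) (use k in auto)
    qed
    have "eventually (\<lambda>n. \<forall>x\<in>set_pmf \<mu>. x \<in> \<omega> ` {..<n}) sequentially"
      by (intro eventually_ball_finite[OF fin] ballI reach)
    then have "eventually (\<lambda>n. 0 < n \<and> set_pmf \<mu> \<subseteq> set_pmf (empirical n \<omega>)) sequentially"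
      using eventually_gt_at_top[of 0] by eventually_elim (auto simp: set_pmf_empirical)
    then show "eventually (\<lambda>n. idiv b \<mu> (empirical n \<omega>) < \<infinity>) sequentially"
    proof (rule eventually_mono)
      fix n assume n: "0 < n \<and> set_pmf \<mu> \<subseteq> set_pmf (empirical n \<omega>)"
      then have "finite (set_pmf (empirical n \<omega>))" by (simp add: set_pmf_empirical)
      then show "idiv b \<mu> (empirical n \<omega>) < \<infinity>"
        using n idiv_eq_sum[of "set_pmf (empirical n \<omega>)" \<mu> "empirical n \<omega>" b] by simp
    qed
  qed
qed

theorem theorem1:
  fixes b :: real and \<mu> :: "'a::countable pmf"
  assumes "infinite (UNIV :: 'a set)" and "b > 1" and "finite (set_pmf \<mu>)"
  shows "(AE \<omega> in iid_seq \<mu>. \<forall>n\<ge>1.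
           set_pmf (empirical n \<omega>) \<subseteq> set_pmf \<mu> \<and>
           entropy b (empirical n \<omega>) < \<infinity> \<and> idiv b (empirical n \<omega>) \<mu> < \<infinity>) \<and>
        (\<forall>n\<ge>1. \<forall>\<epsilon>>0.
           measure_pmf.prob (iid_n n \<mu>) {\<omega>. idiv b (empirical n \<omega>) \<mu> > ereal \<epsilon>}
           \<le> 2 ^ (card (set_pmf \<mu>) + 1) *
              exp (- (2 * (min_mass \<mu>)\<^sup>2 * real n * \<epsilon>\<^sup>2) / (log b (exp 1))\<^sup>2)) \<and>
        (\<forall>n\<ge>1. \<forall>\<epsilon>>0.
           measure_pmf.prob (iid_n n \<mu>)
             {\<omega>. \<bar>entropy b (empirical n \<omega>) - entropy b \<mu>\<bar> > ereal \<epsilon>}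
           \<le> 2 ^ (card (set_pmf \<mu>) + 1) *
              exp (- (2 * real n * \<epsilon>\<^sup>2) /
                     (Max_log b \<mu> + log b (exp 1) / min_mass \<mu>)\<^sup>2)) \<and>
        (\<forall>n\<ge>1. \<forall>\<epsilon>>0.
           measure_pmf.prob (iid_n n \<mu>) {\<omega>. idiv b \<mu> (empirical n \<omega>) > ereal \<epsilon>}
           \<le> 2 ^ (card (set_pmf \<mu>) + 1) *
              (exp (- (2 * real n * \<epsilon>\<^sup>2) /
                      ((log b (exp 1))\<^sup>2 * (1 / min_mass \<mu> + 1)\<^sup>2))
               + exp (- real n * (min_mass \<mu>)\<^sup>2))) \<and>
        (AE \<omega> in iid_seq \<mu>. eventually (\<lambda>n. idiv b \<mu> (empirical n \<omega>) < \<infinity>) sequentially)"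
proof -
  \<comment> \<open>The union bound already gives the constant \<open>2 ^ |A|\<close>.\<close>
  have weaken: "a \<le> 2 ^ k * x \<Longrightarrow> 0 \<le> x \<Longrightarrow> a \<le> 2 ^ (k + 1) * x" for a x :: real and k :: nat
    by (erule order_trans) (simp add: mult_right_mono)
  show ?thesis
    apply (intro conjI allI impI)
    subgoal by (rule AE_empirical_finite[OF assms(3,2)])
    subgoal by (intro weaken prob_idiv_empirical_pmf_gt[OF assms(3,2)]) auto
    subgoal by (intro weaken prob_entropy_empirical_diff_gt[OF assms(3,2)]) auto
    subgoal by (intro weaken prob_idiv_pmf_empirical_gt[OF assms(3,2)]) auto
    subgoal by (rule AE_eventually_idiv_pmf_empirical_finite[OF assms(3)])
    done
qed

end
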